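(* Let $(\{0,1\}^{\mathbb N},\mathbb B_\Pi,m,\sigma)$ be an ergodic Markov shift over two symbols, $X$ a lexicographic-like random variable, $d\in\mathbb N$, $O=\bigcup_{n=0}^\infty\sigma^{-n}(\{\overline0\})$ with $\overline0=(0,0,\dots)$, and $\widetilde{\mathcal P}^X(d)=\{P\setminus O\mid P\in\mathcal P^X(d)\}\cup\{O\}$. Then for every $P\in\widetilde{\mathcal P}^X(d)\setminus\{O\}$ there are $a_0,\dots,a_{d-1}\in\{0,1\}$ with $P\subseteq C_{a_0a_1\dots a_{d-1}}$.
   Context: Markov shift over $\{0,1\}$: given a $2\times2$ stochastic matrix $Q=(q_{ij})$ and a stationary probability vector $p$ with positive entries, the system on one-sided sequences $s=(s_0,s_1,\dots)\in\{0,1\}^{\mathbb N}$ with $\sigma$-algebra $\mathbb B_\Pi$ generated by cylinders $C_{a_0\dots a_{n-1}}=\{s:s_i=a_i,i<n\}$, shift $(\sigma s)_j=s_{j+1}$ and $m(C_{a_0\dots a_{n-1}})=p_{a_0}q_{a_0a_1}\cdots q_{a_{n-2}a_{n-1}}$; ergodic means every $\sigma$-invariant set has measure $0$ or $1$. Lexicographic order: $r\prec s$ iff $r_0<s_0$ or there is $k\in\mathbb N$ with $r_i=s_i$ for $i<k$ and $r_k<s_k$. $X$ is lexicographic-like if it is injective on a set of full $m$-measure and for all $s$ and $j,n\in\mathbb N_0$: $X(\sigma^j s)\le X(\sigma^n s)$ iff $\sigma^j s\preceq\sigma^n s$. Ordinal pattern: $(x_0,\dots,x_d)$ has pattern $\pi=(r_0,\dots,r_d)\in\Pi_d$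 (permutations of $\{0,\dots,d\}$) if $x_{r_0}\ge\dots\ge x_{r_d}$ and $r_{l-1}>r_l$ whenever $x_{r_{l-1}}=x_{r_l}$. The ordinal partition $\mathcal P^X(d)$ consists of the sets $P_\pi=\{s:(X(\sigma^d s),\dots,X(\sigma s),X(s))\text{ has ordinal pattern }\pi\}$, $\pi\in\Pi_d$. *)

theory Defs
  imports "HOL-Analysis.Analysis"
begin

text \<open>Symbols 0 and 1 are encoded as False and True (so the order 0 < 1 is False < True).
  One-sided sequences over the two symbols have type nat \<Rightarrow> bool.\<close>

type_synonym seq = "nat \<Rightarrow> bool"

definition shift :: "seq \<Rightarrow> seq" where
  "shift s = (\<lambda>j. s (Suc j))"

definition cylinder :: "bool list \<Rightarrow> seq set" where
  "cylinder a = {s. \<forall>i<length a. s i = a ! i}"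

definition cylinders :: "seq set set" where
  "cylinders = range cylinder"

definition markov_cyl :: "(bool \<Rightarrow> real) \<Rightarrow> (bool \<Rightarrow> bool \<Rightarrow> real) \<Rightarrow> bool list \<Rightarrow> real" where
  "markov_cyl p Q a = p (a ! 0) * (\<Prod>i<length a - 1. Q (a ! i) (a ! Suc i))"

definition stochastic :: "(bool \<Rightarrow> bool \<Rightarrow> real) \<Rightarrow> bool" where
  "stochastic Q \<longleftrightarrow> (\<forall>i j. Q i j \<ge> 0) \<and> (\<forall>i. Q i False + Q i True = 1)"

definition stationary_pos :: "(bool \<Rightarrow> real) \<Rightarrow> (bool \<Rightarrow> bool \<Rightarrow> real) \<Rightarrow> bool" where
  "stationary_pos p Q \<longleftrightarrow> (\<forall>i. p i > 0) \<and> p False + p True = 1 \<and>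
     (\<forall>j. p False * Q False j + p True * Q True j = p j)"

definition markov_shift :: "seq measure \<Rightarrow> (bool \<Rightarrow> real) \<Rightarrow> (bool \<Rightarrow> bool \<Rightarrow> real) \<Rightarrow> bool" where
  "markov_shift M p Q \<longleftrightarrow> stochastic Q \<and> stationary_pos p Q \<and>
     space M = UNIV \<and> sets M = sigma_sets UNIV cylinders \<and>
     (\<forall>a. a \<noteq> [] \<longrightarrow> emeasure M (cylinder a) = ennreal (markov_cyl p Q a))"

definition ergodic_shift :: "seq measure \<Rightarrow> bool" where
  "ergodic_shift M \<longleftrightarrow>
     (\<forall>A \<in> sets M. shift -` A = A \<longrightarrow> emeasure M A = 0 \<or> emeasure M A = 1)"

definition lex_less :: "seq \<Rightarrow> seq \<Rightarrow> bool" where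
  "lex_less r s \<longleftrightarrow> r 0 < s 0 \<or> (\<exists>k. (\<forall>i<k. r i = s i) \<and> r k < s k)"

definition lex_le :: "seq \<Rightarrow> seq \<Rightarrow> bool" where
  "lex_le r s \<longleftrightarrow> lex_less r s \<or> r = s"

definition lexicographic_like :: "seq measure \<Rightarrow> (seq \<Rightarrow> real) \<Rightarrow> bool" where
  "lexicographic_like M X \<longleftrightarrow>
     (\<exists>A \<in> sets M. emeasure M (space M - A) = 0 \<and> inj_on X A) \<and>
     (\<forall>s j n. X ((shift ^^ j) s) \<le> X ((shift ^^ n) s) \<longleftrightarrow>
               lex_le ((shift ^^ j) s) ((shift ^^ n) s))"

definition perms :: "nat \<Rightarrow> nat list set" where
  "perms d = {r. distinct r \<and> set r = {0..d}}"

definition has_pattern :: "nat \<Rightarrow> (nat \<Rightarrow> real) \<Rightarrow> nat list \<Rightarrow> bool" where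
  "has_pattern d x r \<longleftrightarrow> r \<in> perms d \<and>
     (\<forall>l. 1 \<le> l \<and> l \<le> d \<longrightarrow> x (r ! (l - 1)) \<ge> x (r ! l) \<and>
            (x (r ! (l - 1)) = x (r ! l) \<longrightarrow> r ! (l - 1) > r ! l))"

text \<open>P_\<pi>: the vector (X(\<sigma>^d s), ..., X(\<sigma> s), X(s)) has pattern \<pi>; its i-th entry is X(\<sigma>^(d-i) s).\<close>
definition pattern_set :: "(seq \<Rightarrow> real) \<Rightarrow> nat \<Rightarrow> nat list \<Rightarrow> seq set" where
  "pattern_set X d \<pi> = {s. has_pattern d (\<lambda>i. X ((shift ^^ (d - i)) s)) \<pi>}"

definition ordinal_partition :: "(seq \<Rightarrow> real) \<Rightarrow> nat \<Rightarrow> seq set set" where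
  "ordinal_partition X d = pattern_set X d ` perms d"

definition zero_orbit :: "seq set" where
  "zero_orbit = (\<Union>n. (shift ^^ n) -` {(\<lambda>_. False)})"

definition modified_partition :: "(seq \<Rightarrow> real) \<Rightarrow> nat \<Rightarrow> seq set set" where
  "modified_partition X d = ((\<lambda>P. P - zero_orbit) ` ordinal_partition X d) \<union> {zero_orbit}"

end

theory Submission
  imports Defs
begin

text \<open>
  Fix a pattern \<pi> = (r_0,...,r_d) and a sequence s in P_\<pi> outside the
  zero orbit O, and let x_i = X(\<sigma>^(d-i) s) be the entries of the pattern vector.
  For a sequence t other than 000..., the first symbol t_0 is 1 exactly when
  \<sigma> t \<preceq> t lexicographically.  Since s \<notin> O, every \<sigma>^j s differs from 000...,
  so s_j = 1 iff \<sigma>^(j+1) s \<preceq> \<sigma>^j s iff X(\<sigma>^(j+1) s) \<le> X(\<sigma>^j s) (X is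
  lexicographic-like) iff x_(d-j-1) \<le> x_(d-j).  For a vector with pattern \<pi> the
  last comparison only depends on \<pi>: it holds iff d-j occurs before d-j-1 in \<pi>.
  Hence the first d symbols of s are determined by \<pi>, i.e. P_\<pi> \<setminus> O lies in a
  single cylinder of length d.
\<close>

definition precedes :: "nat list \<Rightarrow> nat \<Rightarrow> nat \<Rightarrow> bool" where
  "precedes r a b \<longleftrightarrow> (\<exists>pa pb. pa < pb \<and> pb < length r \<and> r ! pa = a \<and> r ! pb = b)"

lemma has_pattern_chain:
  assumes hp: "has_pattern d x r" and "pa < pb" and "pb \<le> d"
  shows "x (r ! pb) \<le> x (r ! pa) \<and> (x (r ! pa) = x (r ! pb) \<longrightarrow> r ! pb < r ! pa)"
proof -
  have neighbour: "x (r ! l) \<le> x (r ! (l - 1)) \<and> (x (r ! (l - 1)) = x (r ! l) \<longrightarrow> r ! l < r ! (l - 1))"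
    if "1 \<le> l" "l \<le> d" for l
    using hp that unfolding has_pattern_def by blast
  from \<open>pa < pb\<close> have "Suc pa \<le> pb" by simp
  then show ?thesis using \<open>pb \<le> d\<close>
  proof (induction pb rule: dec_induct)
    case base
    then show ?case using neighbour[of "Suc pa"] by simp
  next
    case (step pb)
    then show ?case using neighbour[of "Suc pb"] by fastforce
  qed
qed

lemma has_pattern_le_iff_precedes:
  assumes hp: "has_pattern d x r" and i: "Suc i \<le> d"
  shows "x i \<le> x (Suc i) \<longleftrightarrow> precedes r (Suc i) i"
proof -
  have r: "distinct r" "set r = {0..d}" using hp unfolding has_pattern_def perms_def by auto
  then have len: "length r = Suc d" using distinct_card[of r] by simp
  obtain p1 where p1: "p1 < Suc d" "r ! p1 = Suc i"
    using r len i by (metis atLeastAtMost_iff in_set_conv_nth le0)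
  obtain p0 where p0: "p0 < Suc d" "r ! p0 = i"
    using r len i by (metis atLeastAtMost_iff in_set_conv_nth le0 Suc_leD)
  show ?thesis
  proof
    assume le: "x i \<le> x (Suc i)"
    have "\<not> p0 < p1"
      using has_pattern_chain[OF hp, of p0 p1] p0 p1 le by force
    moreover have "p0 \<noteq> p1" using p0 p1 by auto
    ultimately show "precedes r (Suc i) i"
      using p0 p1 len unfolding precedes_def by (metis linorder_neqE_nat)
  next
    assume "precedes r (Suc i) i"
    then obtain pa pb where "pa < pb" "pb < length r" "r ! pa = Suc i" "r ! pb = i"
      unfolding precedes_def by blast
    with has_pattern_chain[OF hp, of pa pb] len show "x i \<le> x (Suc i)" by simp
  qed
qed

lemma not_lex_le_first_difference:
  assumes agree: "\<forall>i<k. a i = b i" and greater: "b k < a k"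
  shows "\<not> lex_le a b"
proof
  assume "lex_le a b"
  moreover have "a \<noteq> b" using greater by auto
  ultimately have "lex_less a b" unfolding lex_le_def by simp
  then obtain k' where agree': "\<forall>i<k'. a i = b i" and less: "a k' < b k'"
    unfolding lex_less_def by (metis less_nat_zero_code)
  consider "k' < k" | "k' = k" | "k < k'" by linarith
  then show False
    using agree agree' less greater by cases auto
qed

lemma funpow_shift_apply: "(shift ^^ j) s i = s (i + j)"
  by (induction j arbitrary: i) (simp_all add: shift_def)

text \<open>For t \<noteq> 000..., the first symbol of t is 1 exactly when \<sigma> t \<preceq> t.
  The hypothesis is needed: for t = 000... we have \<sigma> t = t but t_0 = 0.\<close>
lemma first_symbol_iff_shift_lex_le:
  assumes nonzero: "t \<noteq> (\<lambda>_. False)"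
  shows "t 0 \<longleftrightarrow> lex_le (shift t) t"
proof (cases "t 0")
  case True
  show ?thesis
  proof (cases "\<forall>i. t i")
    case True
    then have "shift t = t" unfolding shift_def by auto
    then show ?thesis using \<open>t 0\<close> unfolding lex_le_def by simp
  next
    case False
    text \<open>t = 1...10..., with the first 0 at position k > 0: \<sigma> t is smaller at k-1.\<close>
    define k where "k = (LEAST i. \<not> t i)"
    have tk: "\<not> t k" using False unfolding k_def by (metis LeastI)
    have below: "t i" if "i < k" for i using that unfolding k_def using not_less_Least by blast
    have "k \<noteq> 0" using tk \<open>t 0\<close> by (metis (full_types))
    then have "(\<forall>i<k-1. shift t i = t i) \<and> shift t (k-1) < t (k-1)"
      using below tk unfolding shift_def by simp
    then show ?thesis using \<open>t 0\<close> unfolding lex_le_def lex_less_def by blast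
  qed
next
  case False
  text \<open>t = 0...01..., with the first 1 at position k > 0: \<sigma> t is larger at k-1.\<close>
  have "\<exists>i. t i" using nonzero by auto
  define k where "k = (LEAST i. t i)"
  have tk: "t k" using \<open>\<exists>i. t i\<close> unfolding k_def by (metis LeastI)
  have below: "\<not> t i" if "i < k" for i using that unfolding k_def using not_less_Least by blast
  have "k \<noteq> 0" using tk False by (metis (full_types))
  then have "\<forall>i<k-1. shift t i = t i" "t (k-1) < shift t (k-1)"
    using below tk unfolding shift_def by auto
  then show ?thesis using False not_lex_le_first_difference by blast
qed

lemma symbol_determined_by_pattern:
  assumes lex_like: "\<And>s j n. X ((shift ^^ j) s) \<le> X ((shift ^^ n) s) \<longleftrightarrow>
                               lex_le ((shift ^^ j) s) ((shift ^^ n) s)"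
    and s: "s \<in> pattern_set X d r - zero_orbit" and j: "j < d"
  shows "s j \<longleftrightarrow> precedes r (d - j) (d - j - 1)"
proof -
  let ?x = "\<lambda>i. X ((shift ^^ (d - i)) s)"
  have hp: "has_pattern d ?x r" using s unfolding pattern_set_def by simp
  have nonzero: "(shift ^^ j) s \<noteq> (\<lambda>_. False)" using s unfolding zero_orbit_def by auto
  have "s j \<longleftrightarrow> ((shift ^^ j) s) 0" by (simp add: funpow_shift_apply)
  also have "\<dots> \<longleftrightarrow> lex_le ((shift ^^ Suc j) s) ((shift ^^ j) s)"
    using first_symbol_iff_shift_lex_le[OF nonzero] by simp
  also have "\<dots> \<longleftrightarrow> X ((shift ^^ Suc j) s) \<le> X ((shift ^^ j) s)"
    using lex_like[of "Suc j" s j] by simp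
  also have "\<dots> \<longleftrightarrow> ?x (d - j - 1) \<le> ?x (Suc (d - j - 1))"
    using j by (simp add: Suc_diff_Suc)
  also have "\<dots> \<longleftrightarrow> precedes r (d - j) (d - j - 1)"
    using has_pattern_le_iff_precedes[OF hp, of "d - j - 1"] j by (simp add: Suc_diff_Suc)
  finally show ?thesis .
qed

theorem lemma7:
  fixes M :: "seq measure" and p :: "bool \<Rightarrow> real" and Q :: "bool \<Rightarrow> bool \<Rightarrow> real"
    and X :: "seq \<Rightarrow> real" and d :: nat
  assumes "markov_shift M p Q"
    and "ergodic_shift M"
    and "X \<in> borel_measurable M"
    and "lexicographic_like M X"
    and "d \<ge> 1"
    and "P \<in> modified_partition X d - {zero_orbit}"
  shows "\<exists>a. length a = d \<and> P \<subseteq> cylinder a"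
proof -
  have lex_like: "\<And>s j n. X ((shift ^^ j) s) \<le> X ((shift ^^ n) s) \<longleftrightarrow>
                            lex_le ((shift ^^ j) s) ((shift ^^ n) s)"
    using assms(4) unfolding lexicographic_like_def by blast
  obtain r where P: "P = pattern_set X d r - zero_orbit"
    using assms(6) unfolding modified_partition_def ordinal_partition_def by blast
  define a where "a = map (\<lambda>j. precedes r (d - j) (d - j - 1)) [0..<d]"
  have "P \<subseteq> cylinder a"
    using symbol_determined_by_pattern[OF lex_like] unfolding P a_def cylinder_def by auto
  moreover have "length a = d" unfolding a_def by simp
  ultimately show ?thesis by blast
qed

end
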